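(* Let $(X,\|\cdot\|)$ be a Banach space, $A,B\subset X$ nonempty, let $\phi:A\times\mathbb{R}^+\to\mathbb{R}^+$ have the positive property about $A$, and suppose $A$ is a uniformly convex set about $\phi$. Then the ordered pair $(A,B)$ has the $BUC$ property.
   Context: The metric is $\rho(x,y)=\|x-y\|$; $\mathrm{dist}(A,B)=\inf\{\|a-b\|:a\in A,b\in B\}$; $B(x_0,r)=\{x\in X:\|x-x_0\|<r\}$; $\mathbb{R}^+=(0,\infty)$. A function $\phi:A\times\mathbb{R}^+\to\mathbb{R}^+$ has the positive property about $A$ if for every bounded subset $A'\subset A$ and every $\varepsilon_0>0$ one has $\inf\{\phi(x,\varepsilon):x\in A',\ \varepsilon\ge\varepsilon_0\}>0$. The set $A$ is uniformly convex about $\phi$ if for every $\varepsilon>0$ and all $x,y\in A$ with $\|x-y\|\ge\varepsilon$ one has $\frac{x+y}{2}\in A$ and $B\left(\frac{x+y}{2},\phi\left(\frac{x+y}{2},\varepsilon\right)\right)\subset A$. The ordered pair $(A,B)$ has the bounded $UC$ property ($BUC$) if for all bounded sequences $\{x_n\},\{z_n\}\subset A$ and every sequence $\{y_n\}\subset B$ with $\lim_n\|x_n-y_n\|=\lim_n\|z_n-y_n\|=\mathrm{dist}(A,B)$ one has $\lim_n\|x_n-z_n\|=0$. *)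

theory Defs
  imports "HOL-Analysis.Analysis"
begin

definition set_dist_norm :: "'a::real_normed_vector set \<Rightarrow> 'a set \<Rightarrow> real" where
  "set_dist_norm A B = Inf {norm (a - b) | a b. a \<in> A \<and> b \<in> B}"

definition maps_to_pos :: "'a set \<Rightarrow> ('a \<Rightarrow> real \<Rightarrow> real) \<Rightarrow> bool" where
  "maps_to_pos A \<phi> \<longleftrightarrow> (\<forall>x\<in>A. \<forall>\<epsilon>>0. \<phi> x \<epsilon> > 0)"

text \<open>Positive property: the infimum over a bounded subset and epsilon >= eps0 is positive,
  i.e. there is a positive lower bound (with inf of the empty set being +infinity).\<close>
definition positive_property :: "'a::real_normed_vector set \<Rightarrow> ('a \<Rightarrow> real \<Rightarrow> real) \<Rightarrow> bool" where
  "positive_property A \<phi> \<longleftrightarrow>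
     (\<forall>A'. A' \<subseteq> A \<and> bounded A' \<longrightarrow>
        (\<forall>\<epsilon>0>0. \<exists>c>0. \<forall>x\<in>A'. \<forall>\<epsilon>\<ge>\<epsilon>0. c \<le> \<phi> x \<epsilon>))"

definition uniformly_convex_about :: "'a::real_normed_vector set \<Rightarrow> ('a \<Rightarrow> real \<Rightarrow> real) \<Rightarrow> bool" where
  "uniformly_convex_about A \<phi> \<longleftrightarrow>
     (\<forall>\<epsilon>>0. \<forall>x\<in>A. \<forall>y\<in>A. norm (x - y) \<ge> \<epsilon> \<longrightarrow>
        (x + y) /\<^sub>R 2 \<in> A \<and> ball ((x + y) /\<^sub>R 2) (\<phi> ((x + y) /\<^sub>R 2) \<epsilon>) \<subseteq> A)"

definition BUC :: "'a::real_normed_vector set \<Rightarrow> 'a set \<Rightarrow> bool" where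
  "BUC A B \<longleftrightarrow>
     (\<forall>x z y :: nat \<Rightarrow> 'a.
        (\<forall>n. x n \<in> A) \<and> (\<forall>n. z n \<in> A) \<and> (\<forall>n. y n \<in> B) \<and>
        bounded (range x) \<and> bounded (range z) \<and>
        (\<lambda>n. norm (x n - y n)) \<longlonglongrightarrow> set_dist_norm A B \<and>
        (\<lambda>n. norm (z n - y n)) \<longlonglongrightarrow> set_dist_norm A B
        \<longrightarrow> (\<lambda>n. norm (x n - z n)) \<longlonglongrightarrow> 0)"

end

theory Submission
  imports Defs
begin

text \<open>If \<open>\<parallel>x\<^sub>n - z\<^sub>n\<parallel> \<ge> \<epsilon>\<close> infinitely often, the corresponding midpoints \<open>m\<^sub>n\<close> form a
  bounded subset of \<open>A\<close>, so by the positive property all of them carry a ball of one fixed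
  radius \<open>r\<close> inside \<open>A\<close>. Since \<open>\<parallel>m\<^sub>n - y\<^sub>n\<parallel>\<close> is at most the average of \<open>\<parallel>x\<^sub>n - y\<^sub>n\<parallel>\<close> and
  \<open>\<parallel>z\<^sub>n - y\<^sub>n\<parallel>\<close>, which tend to \<open>dist(A,B)\<close>, walking from \<open>m\<^sub>n\<close> towards \<open>y\<^sub>n\<close> by \<open>r\<close> stays
  in \<open>A\<close> and lands closer than \<open>dist(A,B)\<close> to \<open>y\<^sub>n\<close>. (If \<open>y\<^sub>n\<close> is itself in that ball,
  then \<open>dist(A,B) \<le> 0\<close> and \<open>\<parallel>x\<^sub>n - z\<^sub>n\<parallel> < 2r \<le> \<epsilon>\<close> instead.)\<close>

lemma set_dist_norm_le:
  assumes "a \<in> A" "b \<in> B"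
  shows "set_dist_norm A B \<le> norm (a - b)"
  unfolding set_dist_norm_def
  by (rule cInf_lower) (use assms in \<open>auto intro: bdd_belowI[where m=0]\<close>)

lemma set_dist_norm_le_cball:
  assumes "cball m r \<subseteq> A" "0 \<le> r" "b \<in> B"
  shows "set_dist_norm A B \<le> max 0 (norm (m - b) - r)"
proof (cases "norm (m - b) \<le> r")
  case True
  then have "b \<in> A"
    using assms(1) by (auto simp: dist_norm norm_minus_commute)
  then show ?thesis
    using set_dist_norm_le[OF _ assms(3)] by fastforce
next
  case False
  define L where "L = norm (m - b)"
  have L: "r < L" "0 < L"
    using False assms(2) unfolding L_def by linarith+
  define p where "p = m + (r / L) *\<^sub>R (b - m)"
  have "dist m p = r"
    using L assms(2) by (simp add: p_def dist_norm L_def norm_minus_commute)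
  then have "p \<in> A"
    using assms(1) by auto
  have "p - b = (1 - r / L) *\<^sub>R (m - b)"
    by (simp add: p_def algebra_simps)
  moreover have "0 \<le> 1 - r / L"
    using L by simp
  ultimately have "norm (p - b) = (1 - r / L) * L"
    by (simp add: L_def)
  then have "norm (p - b) = L - r"
    using L by (simp add: left_diff_distrib)
  then show ?thesis
    using set_dist_norm_le[OF \<open>p \<in> A\<close> assms(3)] by (simp add: L_def)
qed

lemma norm_midpoint_diff_le:
  fixes x z y :: "'a::real_normed_vector"
  shows "2 * norm ((x + z) /\<^sub>R 2 - y) \<le> norm (x - y) + norm (z - y)"
proof -
  have "(x + z) /\<^sub>R 2 - y = ((x - y) + (z - y)) /\<^sub>R 2"
    by (simp add: algebra_simps flip: scaleR_add_left)
  then show ?thesis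
    using norm_triangle_ineq[of "x - y" "z - y"] by simp
qed

lemma uniformly_convex_about_uniform_cball:
  assumes "positive_property A \<phi>" "uniformly_convex_about A \<phi>"
    and "S \<subseteq> A" "bounded S" "\<epsilon> > 0"
  obtains r where "r > 0"
    "\<And>u v. u \<in> S \<Longrightarrow> v \<in> S \<Longrightarrow> \<epsilon> \<le> norm (u - v) \<Longrightarrow> cball ((u + v) /\<^sub>R 2) r \<subseteq> A"
proof -
  define M where "M = {(u + v) /\<^sub>R 2 | u v. u \<in> S \<and> v \<in> S \<and> \<epsilon> \<le> norm (u - v)}"
  have ball_A: "(u + v) /\<^sub>R 2 \<in> A \<and> ball ((u + v) /\<^sub>R 2) (\<phi> ((u + v) /\<^sub>R 2) \<epsilon>) \<subseteq> A"
    if "u \<in> S" "v \<in> S" "\<epsilon> \<le> norm (u - v)" for u v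
    using assms(2,3,5) that unfolding uniformly_convex_about_def by blast
  have "M \<subseteq> A"
    using ball_A unfolding M_def by blast
  moreover have "bounded M"
  proof -
    obtain K where K: "\<And>u. u \<in> S \<Longrightarrow> norm u \<le> K"
      using assms(4) unfolding bounded_iff by blast
    have "norm ((u + v) /\<^sub>R 2) \<le> K" if "u \<in> S" "v \<in> S" for u v
      using K[OF that(1)] K[OF that(2)] norm_triangle_ineq[of u v] by simp
    then show ?thesis
      unfolding bounded_iff M_def by blast
  qed
  ultimately obtain c where "c > 0" and c: "\<And>m. m \<in> M \<Longrightarrow> c \<le> \<phi> m \<epsilon>"
    using assms(1,5) unfolding positive_property_def by (metis order_refl)
  show ?thesis
  proof (rule that[of "c / 2"])
    fix u v assume uv: "u \<in> S" "v \<in> S" "\<epsilon> \<le> norm (u - v)"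
    then have "c \<le> \<phi> ((u + v) /\<^sub>R 2) \<epsilon>"
      using c unfolding M_def by blast
    then show "cball ((u + v) /\<^sub>R 2) (c / 2) \<subseteq> A"
      using ball_A[OF uv] \<open>c > 0\<close> by (auto simp: subset_iff)
  qed (use \<open>c > 0\<close> in simp)
qed

theorem theorem42:
  fixes A B :: "'a::banach set" and \<phi> :: "'a \<Rightarrow> real \<Rightarrow> real"
  assumes "A \<noteq> {}" and "B \<noteq> {}"
    and "maps_to_pos A \<phi>"
    and "positive_property A \<phi>"
    and "uniformly_convex_about A \<phi>"
  shows "BUC A B"
  unfolding BUC_def
proof (intro allI impI, rule ccontr)
  fix x z y :: "nat \<Rightarrow> 'a"
  let ?d = "set_dist_norm A B"
  assume H: "(\<forall>n. x n \<in> A) \<and> (\<forall>n. z n \<in> A) \<and> (\<forall>n. y n \<in> B) \<and>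
      bounded (range x) \<and> bounded (range z) \<and>
      (\<lambda>n. norm (x n - y n)) \<longlonglongrightarrow> ?d \<and> (\<lambda>n. norm (z n - y n)) \<longlonglongrightarrow> ?d"
    and "\<not> (\<lambda>n. norm (x n - z n)) \<longlonglongrightarrow> 0"
  then obtain \<epsilon> where "\<epsilon> > 0" and far: "\<And>N. \<exists>n\<ge>N. \<epsilon> \<le> norm (x n - z n)"
    unfolding LIMSEQ_iff by (auto simp: not_less)
  have "range x \<union> range z \<subseteq> A" "bounded (range x \<union> range z)"
    using H by auto
  then obtain r where "r > 0" and r: "\<And>u v. u \<in> range x \<union> range z \<Longrightarrow> v \<in> range x \<union> range z \<Longrightarrow>
      \<epsilon> \<le> norm (u - v) \<Longrightarrow> cball ((u + v) /\<^sub>R 2) r \<subseteq> A"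
    using uniformly_convex_about_uniform_cball[OF assms(4,5), of "range x \<union> range z" \<epsilon>]
      \<open>\<epsilon> > 0\<close> by blast
  define s where "s = min r (\<epsilon> / 2)"
  have "s > 0" "s \<le> r" "s \<le> \<epsilon> / 2"
    using \<open>r > 0\<close> \<open>\<epsilon> > 0\<close> by (auto simp: s_def)
  have "\<forall>\<^sub>F n in sequentially. norm (x n - y n) < ?d + s \<and> norm (z n - y n) < ?d + s"
    using H \<open>s > 0\<close> by (intro eventually_conj order_tendstoD) auto
  then obtain N where N: "\<And>n. n \<ge> N \<Longrightarrow> norm (x n - y n) < ?d + s \<and> norm (z n - y n) < ?d + s"
    unfolding eventually_sequentially by blast
  obtain n where "n \<ge> N" and n: "\<epsilon> \<le> norm (x n - z n)"
    using far by blast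
  have "cball ((x n + z n) /\<^sub>R 2) s \<subseteq> A"
    using r[of "x n" "z n"] n \<open>s \<le> r\<close> by force
  then have "?d \<le> max 0 (norm ((x n + z n) /\<^sub>R 2 - y n) - s)"
    using set_dist_norm_le_cball \<open>s > 0\<close> H by (meson less_imp_le)
  moreover have "norm (x n - z n) \<le> norm (x n - y n) + norm (z n - y n)"
    using norm_triangle_ineq4[of "x n - y n" "z n - y n"] by simp
  ultimately show False
    using norm_midpoint_diff_le[of "x n" "z n" "y n"] N[OF \<open>n \<ge> N\<close>] n \<open>s \<le> \<epsilon> / 2\<close>
    by (simp only: max_def split: if_split_asm; linarith)
qed

end
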